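(* Let $d,k$ be positive integers and $z_1,\dots,z_d$ integers. For $1\le i\le d$ let $A_i=\{z_i+1,\dots,z_i+k\}$ and $B_i=\{z_i+1,\dots,z_i+k-1\}$ (with $B_i=\varnothing$ if $k=1$). Let $U\subseteq\mathbb{R}^d$ satisfy: (1) $U$ is non-empty; (2) $U$ is convex; (3) for each $1\le i\le d$, $\pi_i(U)=\pi_i(H^i_{z_i+1}\cap U)$, where $\pi_i:\mathbb{R}^d\to\mathbb{R}^{d-1}$ deletes the $i$-th coordinate and $H^i_x\subseteq\mathbb{R}^d$ is the hyperplane $\{x_i=x\}$. Then $$(k-1)^d\Big|U\cap\prod_{i=1}^d A_i\Big|\le k^d\Big|U\cap\prod_{i=1}^d B_i\Big|.$$ *)

theory Defs
  imports "HOL-Analysis.Analysis"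
begin

text \<open>We represent R^(d-1)
  as the vectors of R^d whose i-th coordinate is 0 (this is a linear bijection
  onto R^(d-1), so equalities of images are unaffected).\<close>
definition delete_coord :: "'n \<Rightarrow> real^'n \<Rightarrow> real^'n" where
  "delete_coord i x = (\<chi> j. if j = i then 0 else x $ j)"

definition coord_hyperplane :: "'n \<Rightarrow> real \<Rightarrow> (real^'n) set" where
  "coord_hyperplane i c = {x. x $ i = c}"

definition int_box :: "('n \<Rightarrow> int) \<Rightarrow> ('n \<Rightarrow> int) \<Rightarrow> (real^'n) set" where
  "int_box lo hi = {x. \<forall>i. \<exists>a\<in>{lo i..hi i}. x $ i = of_int a}"

end

theory Submission
  imports Defs
begin

text \<open>Let \<open>S\<close> be the set of integer points of \<open>U\<close>. Convexity together with the
  projection hypothesis makes \<open>S\<close> closed under lowering any coordinate \<open>i\<close> down to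
  \<open>z i + 1\<close>: the lowered point lies on the segment between the original point and a point
  of \<open>U\<close> on the hyperplane \<open>x\<^sub>i = z i + 1\<close> with the same other coordinates. For such a
  set, each point of the top layer of a box in coordinate \<open>j\<close> (side length \<open>k\<close>) can be
  lowered to \<open>k - 1\<close> distinct points of the box without that layer, so deleting the layer
  keeps at least a fraction \<open>(k - 1) / k\<close> of the points. Deleting the top layer in each of
  the \<open>d\<close> coordinates in turn gives the claim.\<close>

definition down_closed :: "('n \<Rightarrow> int) \<Rightarrow> ('n \<Rightarrow> int) set \<Rightarrow> bool" where
  "down_closed a S \<longleftrightarrow> (\<forall>f\<in>S. \<forall>i c. a i \<le> c \<longrightarrow> c \<le> f i \<longrightarrow> f(i := c) \<in> S)"

definition lattice_box :: "('n \<Rightarrow> int) \<Rightarrow> ('n \<Rightarrow> int) \<Rightarrow> ('n \<Rightarrow> int) set" where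
  "lattice_box lo hi = {f. \<forall>i. lo i \<le> f i \<and> f i \<le> hi i}"

lemma finite_lattice_box: "finite (lattice_box lo hi :: ('n::finite \<Rightarrow> int) set)"
proof (rule finite_subset)
  show "lattice_box lo hi \<subseteq> PiE UNIV (\<lambda>i. {lo i..hi i})"
    by (auto simp: lattice_box_def PiE_def extensional_def)
qed (simp add: finite_PiE)

lemma card_lattice_box_remove_top_layer:
  fixes S :: "('n::finite \<Rightarrow> int) set"
  assumes down: "down_closed a S" and "a j \<le> hi j"
  shows "(hi j - a j) * int (card (S \<inter> lattice_box a hi))
           \<le> (hi j - a j + 1) * int (card (S \<inter> lattice_box a (hi(j := hi j - 1))))"
proof -
  define B where "B = S \<inter> lattice_box a (hi(j := hi j - 1))"
  define D where "D = {f \<in> S \<inter> lattice_box a hi. f j = hi j}"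
  have fin_B: "finite B" and fin_D: "finite D"
    using finite_lattice_box[of a hi] finite_lattice_box[of a "hi(j := hi j - 1)"]
    by (auto simp: B_def D_def)
  have "lattice_box a (hi(j := hi j - 1)) \<subseteq> lattice_box a hi"
    unfolding lattice_box_def by (smt (verit) fun_upd_apply mem_Collect_eq subsetI)
  then have "B \<union> D \<subseteq> S \<inter> lattice_box a hi"
    by (auto simp: B_def D_def)
  moreover have "S \<inter> lattice_box a hi \<subseteq> B \<union> D"
  proof
    fix f assume f: "f \<in> S \<inter> lattice_box a hi"
    show "f \<in> B \<union> D"
    proof (cases "f j = hi j")
      case False
      have "f j \<le> hi j" using f by (simp add: lattice_box_def)
      with False have "f j \<le> hi j - 1" by simp
      with f show ?thesis by (auto simp: B_def lattice_box_def)
    qed (use f in \<open>simp add: D_def\<close>)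
  qed
  ultimately have split: "S \<inter> lattice_box a hi = B \<union> D" by blast
  have disjoint: "B \<inter> D = {}"
    by (auto simp: B_def D_def lattice_box_def)
  define lower where "lower = (\<lambda>(f :: 'n \<Rightarrow> int, c). f(j := c))"
  have "inj_on lower (D \<times> {a j..hi j - 1})"
  proof (rule inj_onI, clarsimp simp: lower_def)
    fix f c g c'
    assume "f \<in> D" "g \<in> D" and eq: "f(j := c) = g(j := c')"
    then have "f = g" by (metis (mono_tags, lifting) D_def fun_upd_triv fun_upd_upd mem_Collect_eq)
    moreover have "c = c'" using fun_cong[OF eq, of j] by simp
    ultimately show "f = g \<and> c = c'" ..
  qed
  moreover have "lower ` (D \<times> {a j..hi j - 1}) \<subseteq> B"
    using down by (force simp: lower_def B_def D_def down_closed_def lattice_box_def)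
  ultimately have "card (D \<times> {a j..hi j - 1}) \<le> card B"
    using fin_B by (rule card_inj_on_le)
  then have "int (card D * nat (hi j - a j)) \<le> int (card B)"
    unfolding of_nat_le_iff by (simp add: card_cartesian_product)
  then have layer: "(hi j - a j) * int (card D) \<le> int (card B)"
    using assms(2) by (simp only: of_nat_mult int_nat_eq mult.commute) simp
  have "card (S \<inter> lattice_box a hi) = card B + card D"
    using fin_B fin_D disjoint by (simp add: split card_Un_disjoint)
  with layer show ?thesis
    by (simp add: B_def algebra_simps)
qed

lemma card_lattice_box_remove_top_layers:
  fixes S :: "('n::finite \<Rightarrow> int) set" and k :: int
  assumes down: "down_closed a S" and "finite J" and "k \<ge> 1"
    and side: "\<And>i. i \<in> J \<Longrightarrow> hi i = a i + k - 1"
  shows "(k - 1) ^ card J * int (card (S \<inter> lattice_box a hi))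
           \<le> k ^ card J * int (card (S \<inter> lattice_box a (\<lambda>i. if i \<in> J then hi i - 1 else hi i)))"
  using \<open>finite J\<close> side
proof (induction J rule: finite_induct)
  case empty
  then show ?case by simp
next
  case (insert j J)
  define hi' where "hi' = (\<lambda>i. if i \<in> J then hi i - 1 else hi i)"
  have hi'_j: "hi' j - a j = k - 1"
    using insert by (simp add: hi'_def)
  have shrink_j: "hi'(j := hi' j - 1) = (\<lambda>i. if i \<in> insert j J then hi i - 1 else hi i)"
    using insert by (auto simp: hi'_def)
  have "(k - 1) ^ card (insert j J) * int (card (S \<inter> lattice_box a hi))
        = (k - 1) * ((k - 1) ^ card J * int (card (S \<inter> lattice_box a hi)))"
    using insert by simp
  also have "\<dots> \<le> (k - 1) * (k ^ card J * int (card (S \<inter> lattice_box a hi')))"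
    using insert \<open>k \<ge> 1\<close> by (intro mult_left_mono) (auto simp: hi'_def)
  also have "\<dots> = k ^ card J * ((hi' j - a j) * int (card (S \<inter> lattice_box a hi')))"
    by (simp add: hi'_j)
  also have "\<dots> \<le> k ^ card J
                   * ((hi' j - a j + 1) * int (card (S \<inter> lattice_box a (hi'(j := hi' j - 1)))))"
    using card_lattice_box_remove_top_layer[OF down, of j hi'] hi'_j \<open>k \<ge> 1\<close>
    by (intro mult_left_mono) auto
  also have "\<dots> = k ^ card (insert j J)
                   * int (card (S \<inter> lattice_box a (\<lambda>i. if i \<in> insert j J then hi i - 1 else hi i)))"
    using insert by (simp add: hi'_j shrink_j)
  finally show ?case .
qed

definition of_int_vec :: "('n::finite \<Rightarrow> int) \<Rightarrow> real^'n" where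
  "of_int_vec f = (\<chi> i. of_int (f i))"

lemma inj_of_int_vec: "inj of_int_vec"
  by (rule injI) (auto simp: of_int_vec_def vec_eq_iff)

lemma int_box_eq_image_lattice_box:
  "U \<inter> int_box lo hi = of_int_vec ` ({f. of_int_vec f \<in> U} \<inter> lattice_box lo hi)"
proof (intro equalityI subsetI)
  fix x assume x: "x \<in> U \<inter> int_box lo hi"
  then have coord: "\<forall>i. \<exists>a\<in>{lo i..hi i}. x $ i = of_int a"
    by (simp add: int_box_def)
  define f where "f = (\<lambda>i. \<lfloor>x $ i\<rfloor>)"
  have "x $ i = of_int (f i) \<and> lo i \<le> f i \<and> f i \<le> hi i" for i
  proof -
    from coord obtain b where "b \<in> {lo i..hi i}" "x $ i = of_int b" by blast
    then show ?thesis by (simp add: f_def)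
  qed
  then have "x = of_int_vec f" and "f \<in> lattice_box lo hi"
    by (auto simp: of_int_vec_def vec_eq_iff lattice_box_def)
  then show "x \<in> of_int_vec ` ({f. of_int_vec f \<in> U} \<inter> lattice_box lo hi)"
    using x by auto
qed (auto simp: int_box_def lattice_box_def of_int_vec_def)

lemma card_int_box_eq_card_lattice_box:
  "card (U \<inter> int_box lo hi) = card ({f. of_int_vec f \<in> U} \<inter> lattice_box lo hi)"
  unfolding int_box_eq_image_lattice_box
  by (rule card_image, rule inj_on_subset[OF inj_of_int_vec]) simp

lemma down_closed_lattice_points:
  fixes U :: "(real^'n::finite) set"
  assumes "convex U"
    and proj: "\<And>i. delete_coord i ` U = delete_coord i ` (coord_hyperplane i (of_int (a i)) \<inter> U)"
  shows "down_closed a {f. of_int_vec f \<in> U}"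
  unfolding down_closed_def
proof (intro ballI allI impI, simp)
  fix f i c
  assume f: "of_int_vec f \<in> U" and c: "a i \<le> c" "c \<le> f i"
  obtain y where y: "y \<in> U" "y $ i = of_int (a i)"
    and same: "delete_coord i y = delete_coord i (of_int_vec f)"
    using proj[of i] f by (force simp: coord_hyperplane_def)
  have y_off: "y $ j = of_int (f j)" if "j \<noteq> i" for j
    using arg_cong[OF same, of "\<lambda>v. v $ j"] that by (simp add: delete_coord_def of_int_vec_def)
  define t where "t = real_of_int (c - a i) / real_of_int (f i - a i)"
  have "0 \<le> t" "t \<le> 1"
    using c by (auto simp: t_def divide_le_eq_1)
  \<comment> \<open>also if \<open>f i = a i\<close>: then \<open>t = 0\<close>, since \<open>x / 0 = 0\<close>\<close>
  have "real_of_int (c - a i) = t * real_of_int (f i - a i)"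
    using c by (cases "f i = a i") (auto simp: t_def)
  then have "of_int_vec (f(i := c)) = (1 - t) *\<^sub>R y + t *\<^sub>R of_int_vec f"
    using y(2) y_off by (auto simp: vec_eq_iff of_int_vec_def algebra_simps)
  also have "\<dots> \<in> U"
    using convexD_alt[OF \<open>convex U\<close> y(1) f \<open>0 \<le> t\<close> \<open>t \<le> 1\<close>] .
  finally show "of_int_vec (f(i := c)) \<in> U" .
qed

theorem lemma2p4:
  fixes k :: nat and z :: "'n::finite \<Rightarrow> int" and U :: "(real^'n) set"
  assumes "k \<ge> 1"
    and "U \<noteq> {}"
    and "convex U"
    and "\<And>i. delete_coord i ` U
               = delete_coord i ` (coord_hyperplane i (of_int (z i + 1)) \<inter> U)"
  shows "(k - 1) ^ CARD('n) * card (U \<inter> int_box (\<lambda>i. z i + 1) (\<lambda>i. z i + int k))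
         \<le> k ^ CARD('n) * card (U \<inter> int_box (\<lambda>i. z i + 1) (\<lambda>i. z i + int k - 1))"
proof -
  define S where "S = {f. of_int_vec f \<in> U}"
  have "down_closed (\<lambda>i. z i + 1) S"
    unfolding S_def using down_closed_lattice_points[OF assms(3,4)] .
  from card_lattice_box_remove_top_layers[OF this finite,
      where J = UNIV and k = "int k" and hi = "\<lambda>i. z i + int k"] assms(1)
  have "(int k - 1) ^ CARD('n) * int (card (S \<inter> lattice_box (\<lambda>i. z i + 1) (\<lambda>i. z i + int k)))
        \<le> int k ^ CARD('n) * int (card (S \<inter> lattice_box (\<lambda>i. z i + 1) (\<lambda>i. z i + int k - 1)))"
    by simp
  then have "int ((k - 1) ^ CARD('n) * card (S \<inter> lattice_box (\<lambda>i. z i + 1) (\<lambda>i. z i + int k)))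
        \<le> int (k ^ CARD('n) * card (S \<inter> lattice_box (\<lambda>i. z i + 1) (\<lambda>i. z i + int k - 1)))"
    using assms(1) by (simp add: of_nat_diff)
  then show ?thesis
    by (simp only: of_nat_le_iff card_int_box_eq_card_lattice_box S_def)
qed

end
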